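(* Under the standing assumptions below (Assumption 1 with $\xi=\beta$), for every $(Q,\mu)\in\mathcal{C}\times\mathcal{P}(\mathsf{X})$ the function $x\mapsto f(x,Q,\mu)$ is well defined and $H(Q,\mu)=(H_1(Q,\mu),H_2(Q,\mu))\in\mathcal{C}\times\mathcal{P}(\mathsf{X})$. In particular, $\|H_1(Q,\mu)\|_w\le \frac{M}{1-\beta\alpha}$ and $\|(H_1(Q,\mu))_{\min}\|_{\mathrm{Lip}}\le \frac{L_2}{1-\beta K_2}$.
   Context: Setting. $\mathsf{X}$ is a Polish space with metric $d_{\mathsf X}$; $\mathsf{A}\subset\mathbb{R}^d$ is compact, with Euclidean norm $\|\cdot\|$. $\mathcal{P}(\mathsf X)$ is the set of Borel probability measures on $\mathsf X$. $p:\mathsf X\times\mathsf A\times\mathcal P(\mathsf X)\to\mathcal P(\mathsf X)$ is a measurable transition kernel and $c:\mathsf X\times\mathsf A\times\mathcal P(\mathsf X)\to[0,\infty)$ a measurable one-stage cost. $\beta\in(0,1)$ is a discount factor. Notation. $w:\mathsf X\times\mathsf A\to[1,\infty)$ is a continuous weight function. For $u:\mathsf X\times\mathsf A\to\mathbb R$, $u_{\min}(x)=\inf_{a\in\mathsf A}u(x,a)$ and $u_{\max}(x)=\sup_{a\in\mathsf A}u(x,a)$ (in particular $w_{\max}(x)=\sup_a w(x,a)$). $\|v\|_w=\sup_{x,a}|v(x,a)|/w(x,a)$ for $v:\mathsf X\times\mathsf A\to\mathbb R$; $\|u\|_{w_{\max}}=\sup_x|u(x)|/w_{\max}(x)$ for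 $u:\mathsf X\to\mathbb R$. $B(\mathsf X,K)$ is the set of measurable $u:\mathsf X\to\mathbb R$ with $\|u\|_{w_{\max}}\le K$. For $g:\mathsf X\to\mathbb R$, $\|g\|_{\mathrm{Lip}}=\sup_{x\ne y}|g(x)-g(y)|/d_{\mathsf X}(x,y)$, and $\mathrm{Lip}(\mathsf X,K)$ is the set of continuous $g$ with $\|g\|_{\mathrm{Lip}}\le K$. $W_1(\mu,\nu)=\inf\{\int d_{\mathsf X}(x,y)\,\xi(dx,dy):\xi$ a coupling of $\mu,\nu\}=\sup\{|\int g\,d\mu-\int g\,d\nu|: g\in\mathrm{Lip}(\mathsf X,1)\}$. Assumption 1 (with $\xi=\beta$). (a) $c$ is continuous, $\|c(\cdot,\cdot,\mu)-c(\cdot,\cdot,\hat\mu)\|_w\le L_1W_1(\mu,\hat\mu)$ for all $\mu,\hat\mu$, and $\sup_{(a,\mu)}|c(x,a,\mu)-c(\hat x,a,\mu)|\le L_2 d_{\mathsf X}(x,\hat x)$ for all $x,\hat x$. (b) $p(\cdot|x,a,\mu)$ is weakly continuous in $(x,a,\mu)$, $\sup_x W_1(p(\cdot|x,a,\mu),p(\cdot|x,\hat a,\hat\mu))\le K_1(\|a-\hat a\|+W_1(\mu,\hat\mu))$ and $\sup_\mu W_1(p(\cdot|x,a,\mu),p(\cdot|\hat x,\hat a,\mu))\le K_2(d_{\mathsf X}(x,\hat x)+\|a-\hat a\|)$, with $\beta K_2<1$. (c) $\mathsf A$ is convex. (d) There are $M,\alpha\ge0$ with $\beta\alpha<1$,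 $c(x,a,\mu)\le M w(x,a)$ and $\int w_{\max}(y)\,p(dy|x,a,\mu)\le\alpha w(x,a)$ for all $(x,a,\mu)$. (e) Let $F(x,v,\mu,a)=c(x,a,\mu)+\xi\int v(y)\,p(dy|x,a,\mu)$ and let $\mathcal F$ be the set of nonnegative functions in $\mathrm{Lip}(\mathsf X,\frac{L_2}{1-\xi K_2})\cap B(\mathsf X,\frac{M}{1-\xi\alpha})$. For all $v\in\mathcal F$, $\mu$, $x$, $a\mapsto F(x,v,\mu,a)$ is differentiable and $\rho$-strongly convex on $\mathsf A$ for some $\rho>0$: $F(x,v,\mu,a)\ge F(x,v,\mu,\hat a)+\nabla F(x,v,\mu,\hat a)^T(a-\hat a)+\frac\rho2\|a-\hat a\|^2$; and $\sup_{a}\|\nabla F(x,v,\mu,a)-\nabla F(\hat x,\hat v,\hat\mu,a)\|\le K_F(d_{\mathsf X}(x,\hat x)+\|v-\hat v\|_{w_{\max}}+W_1(\mu,\hat\mu))$ for all $x,\hat x\in\mathsf X$, $v,\hat v\in\mathcal F$, $\mu,\hat\mu$. Here gradients are with respect to $a$. Objects. $\mathcal C=\{Q:\mathsf X\times\mathsf A\to[0,\infty)$ measurable $:\ \|Q\|_w\le\frac{M}{1-\beta\alpha},\ \|Q_{\min}\|_{\mathrm{Lip}}\le\frac{L_2}{1-\beta K_2}\}$. For $(x,Q,\mu)\in\mathsf X\times\mathcal C\times\mathcal P(\mathsf X)$, $f(x,Q,\mu)$ is the unique minimizer over $a\in\mathsf A$ of $F(x,Q_{\min},\mu,a)=c(x,a,\mu)+\beta\int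 Q_{\min}(y)p(dy|x,a,\mu)$. The MFE operator is $H(Q,\mu)=(H_1(Q,\mu),H_2(Q,\mu))$ with $H_1(Q,\mu)(x,a)=c(x,a,\mu)+\beta\int_{\mathsf X}Q_{\min}(y)\,p(dy|x,a,\mu)$ and $H_2(Q,\mu)(\cdot)=\int_{\mathsf X}p(\cdot|x,f(x,Q,\mu),\mu)\,\mu(dx)$. *)

theory Defs
  imports "HOL-Probability.Probability"
begin

definition probs :: "'x::topological_space measure set" where
  "probs = {M. prob_space M \<and> sets M = sets borel}"

definition weak_conv :: "(nat \<Rightarrow> 'x::topological_space measure) \<Rightarrow> 'x measure \<Rightarrow> bool" where
  "weak_conv Ms M \<longleftrightarrow>
     (\<forall>g::'x \<Rightarrow> real. continuous_on UNIV g \<and> bounded (range g) \<longrightarrow>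
        (\<lambda>n. integral\<^sup>L (Ms n) g) \<longlonglongrightarrow> integral\<^sup>L M g)"

definition coupling :: "'x::metric_space measure \<Rightarrow> 'x measure \<Rightarrow> ('x \<times> 'x) measure \<Rightarrow> bool" where
  "coupling \<mu> \<nu> \<xi> \<longleftrightarrow> prob_space \<xi> \<and> sets \<xi> = sets (borel \<Otimes>\<^sub>M borel) \<and>
     distr \<xi> borel fst = \<mu> \<and> distr \<xi> borel snd = \<nu>"

definition W1 :: "'x::metric_space measure \<Rightarrow> 'x measure \<Rightarrow> ennreal" where
  "W1 \<mu> \<nu> = (INF \<xi> \<in> {\<xi>. coupling \<mu> \<nu> \<xi>}. \<integral>\<^sup>+ z. ennreal (dist (fst z) (snd z)) \<partial>\<xi>)"

definition umin :: "'a set \<Rightarrow> ('x \<Rightarrow> 'a \<Rightarrow> real) \<Rightarrow> 'x \<Rightarrow> real" where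
  "umin A u x = (INF a\<in>A. u x a)"

definition umax :: "'a set \<Rightarrow> ('x \<Rightarrow> 'a \<Rightarrow> real) \<Rightarrow> 'x \<Rightarrow> real" where
  "umax A u x = (SUP a\<in>A. u x a)"

text \<open>The statement \<open>\<parallel>v\<parallel>_w \<le> K\<close> written out pointwise.\<close>
definition wnorm_le :: "'a set \<Rightarrow> ('x \<Rightarrow> 'a \<Rightarrow> real) \<Rightarrow> ('x \<Rightarrow> 'a \<Rightarrow> real) \<Rightarrow> real \<Rightarrow> bool" where
  "wnorm_le A w v K \<longleftrightarrow> (\<forall>x. \<forall>a\<in>A. \<bar>v x a\<bar> \<le> K * w x a)"

definition wmax_norm :: "'a set \<Rightarrow> ('x \<Rightarrow> 'a \<Rightarrow> real) \<Rightarrow> ('x \<Rightarrow> real) \<Rightarrow> real" where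
  "wmax_norm A w u = (SUP x. \<bar>u x\<bar> / umax A w x)"

definition Bset :: "'a set \<Rightarrow> ('x::topological_space \<Rightarrow> 'a \<Rightarrow> real) \<Rightarrow> real \<Rightarrow> ('x \<Rightarrow> real) set" where
  "Bset A w K = {u. u \<in> borel_measurable borel \<and> (\<forall>x. \<bar>u x\<bar> \<le> K * umax A w x)}"

definition LipSet :: "real \<Rightarrow> ('x::metric_space \<Rightarrow> real) set" where
  "LipSet K = {g. continuous_on UNIV g \<and> (\<forall>x y. \<bar>g x - g y\<bar> \<le> K * dist x y)}"

definition Fop :: "('x \<Rightarrow> 'a \<Rightarrow> 'x measure \<Rightarrow> real) \<Rightarrow> ('x \<Rightarrow> 'a \<Rightarrow> 'x measure \<Rightarrow> 'x measure)
    \<Rightarrow> real \<Rightarrow> 'x \<Rightarrow> ('x \<Rightarrow> real) \<Rightarrow> 'x measure \<Rightarrow> 'a \<Rightarrow> real" where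
  "Fop c p \<xi> x v \<mu> a = c x a \<mu> + \<xi> * (\<integral>y. v y \<partial>(p x a \<mu>))"

definition Fclass :: "'a set \<Rightarrow> ('x::metric_space \<Rightarrow> 'a \<Rightarrow> real) \<Rightarrow> real \<Rightarrow> real \<Rightarrow> real \<Rightarrow> real \<Rightarrow> real
    \<Rightarrow> ('x \<Rightarrow> real) set" where
  "Fclass A w \<xi> L2 K2 M \<alpha> =
     {v. (\<forall>x. 0 \<le> v x) \<and> v \<in> LipSet (L2 / (1 - \<xi> * K2)) \<and> v \<in> Bset A w (M / (1 - \<xi> * \<alpha>))}"

definition Cclass :: "'a::topological_space set \<Rightarrow> ('x::metric_space \<Rightarrow> 'a \<Rightarrow> real) \<Rightarrow> real \<Rightarrow> real \<Rightarrow> real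
    \<Rightarrow> real \<Rightarrow> real \<Rightarrow> ('x \<Rightarrow> 'a \<Rightarrow> real) set" where
  "Cclass A w \<beta> L2 K2 M \<alpha> =
     {Q. (\<lambda>z. Q (fst z) (snd z)) \<in> borel_measurable (restrict_space borel (UNIV \<times> A)) \<and>
         (\<forall>x. \<forall>a\<in>A. 0 \<le> Q x a) \<and>
         wnorm_le A w Q (M / (1 - \<beta> * \<alpha>)) \<and>
         (\<forall>x y. \<bar>umin A Q x - umin A Q y\<bar> \<le> (L2 / (1 - \<beta> * K2)) * dist x y)}"

definition is_minimizer :: "'a set \<Rightarrow> ('a \<Rightarrow> real) \<Rightarrow> 'a \<Rightarrow> bool" where
  "is_minimizer A g a \<longleftrightarrow> a \<in> A \<and> (\<forall>b\<in>A. g a \<le> g b)"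

definition fpol :: "('x \<Rightarrow> 'a \<Rightarrow> 'x measure \<Rightarrow> real) \<Rightarrow> ('x \<Rightarrow> 'a \<Rightarrow> 'x measure \<Rightarrow> 'x measure)
    \<Rightarrow> real \<Rightarrow> 'a set \<Rightarrow> 'x \<Rightarrow> ('x \<Rightarrow> 'a \<Rightarrow> real) \<Rightarrow> 'x measure \<Rightarrow> 'a" where
  "fpol c p \<beta> A x Q \<mu> = (THE a. is_minimizer A (Fop c p \<beta> x (umin A Q) \<mu>) a)"

definition H1 :: "('x \<Rightarrow> 'a \<Rightarrow> 'x measure \<Rightarrow> real) \<Rightarrow> ('x \<Rightarrow> 'a \<Rightarrow> 'x measure \<Rightarrow> 'x measure)
    \<Rightarrow> real \<Rightarrow> 'a set \<Rightarrow> ('x \<Rightarrow> 'a \<Rightarrow> real) \<Rightarrow> 'x measure \<Rightarrow> 'x \<Rightarrow> 'a \<Rightarrow> real" where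
  "H1 c p \<beta> A Q \<mu> x a = c x a \<mu> + \<beta> * (\<integral>y. umin A Q y \<partial>(p x a \<mu>))"

definition H2 :: "('x::topological_space \<Rightarrow> 'a \<Rightarrow> 'x measure \<Rightarrow> real) \<Rightarrow> ('x \<Rightarrow> 'a \<Rightarrow> 'x measure \<Rightarrow> 'x measure)
    \<Rightarrow> real \<Rightarrow> 'a set \<Rightarrow> ('x \<Rightarrow> 'a \<Rightarrow> real) \<Rightarrow> 'x measure \<Rightarrow> 'x measure" where
  "H2 c p \<beta> A Q \<mu> =
     measure_of UNIV (sets borel)
       (\<lambda>B. \<integral>\<^sup>+ x. emeasure (p x (fpol c p \<beta> A x Q \<mu>) \<mu>) B \<partial>\<mu>)"

end

theory Submission
  imports Defs
begin

text \<open>\<open>Q\<^sub>min\<close> inherits nonnegativity, the weighted bound and the Lipschitz bound from \<open>Q\<close>.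
  The weighted bound on \<open>H\<^sub>1\<close> comes from \<open>c \<le> M w\<close> and the drift condition
  \<open>\<integral> w\<^sub>max dp \<le> \<alpha> w\<close>, because \<open>M + \<beta>\<alpha> M/(1-\<beta>\<alpha>) = M/(1-\<beta>\<alpha>)\<close>; the Lipschitz bound on
  \<open>(H\<^sub>1)\<^sub>min\<close> comes from the Lipschitz dependence of \<open>c\<close> and \<open>p\<close> on \<open>x\<close>, the easy half of
  Kantorovich--Rubinstein duality, and \<open>L\<^sub>2 + \<beta>K\<^sub>2 L\<^sub>2/(1-\<beta>K\<^sub>2) = L\<^sub>2/(1-\<beta>K\<^sub>2)\<close>.
  Strong convexity in the action gives a unique minimiser \<open>f(x)\<close>, and comparing the quadratic
  growth of \<open>H\<^sub>1(x,\<cdot>)\<close> and \<open>H\<^sub>1(y,\<cdot>)\<close> at their minimisers gives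
  \<open>\<parallel>f(x) - f(y)\<parallel>\<^sup>2 \<le> (4L/\<rho>) d(x,y)\<close> with \<open>L = L\<^sub>2/(1-\<beta>K\<^sub>2)\<close>. So \<open>x \<mapsto> p(\<cdot>|x,f(x),\<mu>)\<close> is weakly continuous, hence a
  measurable kernel, and \<open>H\<^sub>2\<close> is its mixture against \<open>\<mu>\<close>.\<close>

definition strongly_convex_grad_on :: "'a::real_inner set \<Rightarrow> ('a \<Rightarrow> real) \<Rightarrow> ('a \<Rightarrow> 'a) \<Rightarrow> real \<Rightarrow> bool" where
  "strongly_convex_grad_on A F D \<rho> \<longleftrightarrow>
     (\<forall>u\<in>A. \<forall>v\<in>A. F v + D v \<bullet> (u - v) + \<rho> / 2 * (norm (u - v))\<^sup>2 \<le> F u)"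

lemma strongly_convex_minimizer_growth:
  fixes F :: "'a::real_inner \<Rightarrow> real"
  assumes cvx: "convex A" and sc: "strongly_convex_grad_on A F D \<rho>"
    and min: "is_minimizer A F a" and b: "b \<in> A"
  shows "F a + \<rho> / 4 * (norm (a - b))\<^sup>2 \<le> F b"
proof -
  define m where "m = (1/2) *\<^sub>R a + (1/2) *\<^sub>R b"
  have a: "a \<in> A" and a_min: "\<And>c. c \<in> A \<Longrightarrow> F a \<le> F c"
    using min by (auto simp: is_minimizer_def)
  have m: "m \<in> A" unfolding m_def by (rule convexD[OF cvx a b]) auto
  have half: "(1/2) *\<^sub>R x + (1/2) *\<^sub>R x = x" for x :: 'a
    by (simp flip: scaleR_add_left)
  have am: "a - m = (1/2) *\<^sub>R (a - b)" and bm: "b - m = - ((1/2) *\<^sub>R (a - b))"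
    by (simp_all add: m_def algebra_simps half)
  have dist_m: "(norm (a - m))\<^sup>2 = (norm (a - b))\<^sup>2 / 4" "(norm (b - m))\<^sup>2 = (norm (a - b))\<^sup>2 / 4"
    unfolding am bm norm_minus_cancel by (simp_all add: power2_eq_square)
  \<comment> \<open>Adding the two strong-convexity inequalities at the midpoint cancels the gradient terms.\<close>
  have "F m + D m \<bullet> (a - m) + \<rho> / 2 * (norm (a - m))\<^sup>2 \<le> F a"
    and "F m + D m \<bullet> (b - m) + \<rho> / 2 * (norm (b - m))\<^sup>2 \<le> F b"
    using sc a b m by (auto simp: strongly_convex_grad_on_def)
  moreover have "D m \<bullet> (b - m) = - (D m \<bullet> (a - m))"
    unfolding am bm by simp
  ultimately have "2 * F m + \<rho> / 4 * (norm (a - b))\<^sup>2 \<le> F a + F b"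
    unfolding dist_m by (simp add: field_simps)
  then show ?thesis using a_min[OF m] by linarith
qed

lemma strongly_convex_ex1_minimizer:
  fixes F :: "'a::real_inner \<Rightarrow> real"
  assumes "compact A" "convex A" "A \<noteq> {}" "continuous_on A F" "0 < \<rho>"
    and sc: "strongly_convex_grad_on A F D \<rho>"
  shows "\<exists>!a. is_minimizer A F a"
proof -
  obtain a where "a \<in> A" "\<forall>b\<in>A. F a \<le> F b"
    using continuous_attains_inf[OF assms(1,3,4)] by blast
  then have a: "is_minimizer A F a" by (simp add: is_minimizer_def)
  show ?thesis
  proof (rule ex1I[of "is_minimizer A F" a, OF a])
    fix b assume b: "is_minimizer A F b"
    then have "F b \<le> F a" using a by (simp add: is_minimizer_def)
    moreover have "F a + \<rho> / 4 * (norm (a - b))\<^sup>2 \<le> F b"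
      using strongly_convex_minimizer_growth[OF assms(2) sc a] b by (simp add: is_minimizer_def)
    ultimately have "\<rho> * (norm (a - b))\<^sup>2 \<le> 0" by linarith
    then show "b = a" using \<open>0 < \<rho>\<close> by (simp add: mult_le_0_iff)
  qed
qed

lemma strongly_convex_minimizers_close:
  fixes F G :: "'a::real_inner \<Rightarrow> real"
  assumes cvx: "convex A"
    and F: "strongly_convex_grad_on A F DF \<rho>" "is_minimizer A F a"
    and G: "strongly_convex_grad_on A G DG \<rho>" "is_minimizer A G b"
    and close: "\<And>c. c \<in> A \<Longrightarrow> \<bar>F c - G c\<bar> \<le> d"
  shows "\<rho> / 2 * (norm (a - b))\<^sup>2 \<le> 2 * d"
proof -
  have a: "a \<in> A" and b: "b \<in> A" using F(2) G(2) by (auto simp: is_minimizer_def)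
  have "F a + \<rho> / 4 * (norm (a - b))\<^sup>2 \<le> F b"
    by (rule strongly_convex_minimizer_growth[OF cvx F b])
  moreover have "G b + \<rho> / 4 * (norm (a - b))\<^sup>2 \<le> G a"
    using strongly_convex_minimizer_growth[OF cvx G a] by (simp add: norm_minus_commute)
  ultimately show ?thesis using close[OF a] close[OF b] by (simp add: abs_le_iff)
qed

lemma umin_abs_diff_le:
  assumes "A \<noteq> {}" "bdd_below (u x ` A)" "bdd_below (u y ` A)"
    and diff: "\<And>a. a \<in> A \<Longrightarrow> \<bar>u x a - u y a\<bar> \<le> d"
  shows "\<bar>umin A u x - umin A u y\<bar> \<le> d"
proof -
  have "umin A u s \<le> umin A u t + d"
    if bdd: "bdd_below (u s ` A)" and le: "\<And>a. a \<in> A \<Longrightarrow> u s a \<le> u t a + d" for s t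
  proof -
    have "umin A u s - d \<le> umin A u t"
      unfolding umin_def
    proof (rule cINF_greatest[OF assms(1)])
      fix a assume "a \<in> A"
      then show "(INF a\<in>A. u s a) - d \<le> u t a"
        using cINF_lower[OF bdd \<open>a \<in> A\<close>] le[OF \<open>a \<in> A\<close>] by linarith
    qed
    then show ?thesis by linarith
  qed
  from this[of x y] this[of y x] show ?thesis
    using assms(2,3) diff by (force simp: abs_le_iff)
qed

lemma weak_conv_const: "weak_conv (\<lambda>_. \<mu>) \<mu>"
  by (simp add: weak_conv_def)

lemma weak_convD:
  fixes g :: "'x::topological_space \<Rightarrow> real"
  shows "weak_conv Ms M \<Longrightarrow> continuous_on UNIV g \<Longrightarrow> bounded (range g) \<Longrightarrow>
     (\<lambda>n. integral\<^sup>L (Ms n) g) \<longlonglongrightarrow> integral\<^sup>L M g"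
  by (simp add: weak_conv_def)

lemma probs_measurable:
  "M \<in> probs \<Longrightarrow> f \<in> borel_measurable borel \<Longrightarrow> f \<in> borel_measurable M"
  using measurable_cong_sets[of M borel borel borel] by (auto simp: probs_def)

lemma integral_const_probs: "M \<in> probs \<Longrightarrow> integral\<^sup>L M (\<lambda>_. r::real) = r"
  unfolding probs_def by (auto simp: prob_space.prob_space)

lemma abs_integral_diff_le_W1:
  fixes g :: "'x::metric_space \<Rightarrow> real"
  assumes \<mu>: "\<mu> \<in> probs" and \<nu>: "\<nu> \<in> probs" and g: "g \<in> borel_measurable borel"
    and int: "integrable \<mu> g" "integrable \<nu> g"
    and lip: "\<And>x y. \<bar>g x - g y\<bar> \<le> K * dist x y" and "0 \<le> K"
  shows "ennreal \<bar>integral\<^sup>L \<mu> g - integral\<^sup>L \<nu> g\<bar> \<le> ennreal K * W1 \<mu> \<nu>"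
proof (cases "K = 0")
  case True
  then have "g = (\<lambda>_. g undefined)" using lip[of _ undefined] by auto
  then show ?thesis using integral_const_probs[OF \<mu>] integral_const_probs[OF \<nu>] by (metis diff_self abs_zero ennreal_0 zero_le)
next
  case False
  with \<open>0 \<le> K\<close> have K: "0 < K" by simp
  have "ennreal (\<bar>integral\<^sup>L \<mu> g - integral\<^sup>L \<nu> g\<bar> / K) \<le> W1 \<mu> \<nu>"
    unfolding W1_def
  proof (rule INF_greatest)
    fix \<xi> assume "\<xi> \<in> {\<xi>. coupling \<mu> \<nu> \<xi>}"
    then have sets: "sets \<xi> = sets (borel \<Otimes>\<^sub>M borel)"
      and marg: "distr \<xi> borel fst = \<mu>" "distr \<xi> borel snd = \<nu>"
      by (auto simp: coupling_def)
    have fst: "fst \<in> measurable \<xi> borel" and snd: "snd \<in> measurable \<xi> borel"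
      by (simp_all add: measurable_cong_sets[OF sets refl])
    have int\<xi>: "integrable \<xi> (\<lambda>z. g (fst z))" "integrable \<xi> (\<lambda>z. g (snd z))"
      using int integrable_distr_eq[OF fst g] integrable_distr_eq[OF snd g] marg by simp_all
    have "integral\<^sup>L \<mu> g = (\<integral>z. g (fst z) \<partial>\<xi>)" "integral\<^sup>L \<nu> g = (\<integral>z. g (snd z) \<partial>\<xi>)"
      using integral_distr[OF fst g] integral_distr[OF snd g] marg by simp_all
    then have "\<bar>integral\<^sup>L \<mu> g - integral\<^sup>L \<nu> g\<bar> / K = \<bar>\<integral>z. (g (fst z) - g (snd z)) / K \<partial>\<xi>\<bar>"
      using int\<xi> K by (simp add: abs_divide)
    also have "ennreal \<dots> \<le> (\<integral>\<^sup>+z. ennreal (norm ((g (fst z) - g (snd z)) / K)) \<partial>\<xi>)"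
      using integral_norm_bound_ennreal[of \<xi> "\<lambda>z. (g (fst z) - g (snd z)) / K"] int\<xi> by simp
    also have "\<dots> \<le> (\<integral>\<^sup>+z. ennreal (dist (fst z) (snd z)) \<partial>\<xi>)"
      using lip K by (intro nn_integral_mono ennreal_leI) (simp add: abs_divide divide_le_eq mult.commute)
    finally show "ennreal (\<bar>integral\<^sup>L \<mu> g - integral\<^sup>L \<nu> g\<bar> / K) \<le> \<dots>" .
  qed
  then have "ennreal K * ennreal (\<bar>integral\<^sup>L \<mu> g - integral\<^sup>L \<nu> g\<bar> / K) \<le> ennreal K * W1 \<mu> \<nu>"
    by (rule mult_left_mono) simp
  then show ?thesis using K by (simp add: ennreal_mult[symmetric])
qed

lemma integrable_dominated_by_weight:
  fixes g h :: "'x \<Rightarrow> real"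
  assumes g: "g \<in> borel_measurable M" "\<And>y. 0 \<le> g y" "\<And>y. g y \<le> B * h y"
    and h: "\<And>y. 0 \<le> h y" "(\<integral>\<^sup>+y. ennreal (h y) \<partial>M) \<le> ennreal C"
    and "0 \<le> B" "0 \<le> C"
  shows "integrable M g \<and> integral\<^sup>L M g \<le> B * C"
proof (cases "B = 0")
  case True
  then have "g = (\<lambda>_. 0)" using g(2,3) by (auto intro: antisym)
  then show ?thesis using True by simp
next
  case False
  with \<open>0 \<le> B\<close> have B: "0 < B" by simp
  have "(\<integral>\<^sup>+y. ennreal (g y) \<partial>M) = (\<integral>\<^sup>+y. ennreal B * ennreal (g y / B) \<partial>M)"
    using B g(2) by (intro nn_integral_cong) (simp add: ennreal_mult[symmetric])
  also have "\<dots> = ennreal B * (\<integral>\<^sup>+y. ennreal (g y / B) \<partial>M)"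
    using g(1) by (intro nn_integral_cmult) simp
  also have "\<dots> \<le> ennreal B * ennreal C"
    using B g(3) h(2)
    by (intro mult_left_mono order.trans[OF nn_integral_mono h(2)] ennreal_leI)
       (simp_all add: divide_le_eq mult.commute)
  also have "\<dots> = ennreal (B * C)" using B \<open>0 \<le> C\<close> by (simp add: ennreal_mult)
  finally have nn: "(\<integral>\<^sup>+y. ennreal (g y) \<partial>M) \<le> ennreal (B * C)" .
  then have "integrable M g"
    using g(1,2) by (intro integrableI_bounded) (auto simp: top.not_eq_extremum intro: le_less_trans)
  moreover have "integral\<^sup>L M g \<le> B * C"
    using integral_eq_nn_integral[OF g(1)] g(2) enn2real_leI[OF _ nn] B \<open>0 \<le> C\<close> by simp
  ultimately show ?thesis by simp
qed

lemma measurable_emeasure_closed: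
  fixes P :: "'y::topological_space \<Rightarrow> 'x::metric_space measure"
  assumes P: "\<And>z. P z \<in> probs"
    and integrals: "\<And>h::'x \<Rightarrow> real. continuous_on UNIV h \<Longrightarrow> bounded (range h) \<Longrightarrow>
                      (\<lambda>z. integral\<^sup>L (P z) h) \<in> borel_measurable borel"
    and C: "closed C"
  shows "(\<lambda>z. emeasure (P z) C) \<in> borel_measurable borel"
proof (cases "C = {}")
  case True then show ?thesis by simp
next
  case False
  define h where "h n y = max 0 (1 - real n * infdist y C)" for n y
  have h_cont: "continuous_on UNIV (h n)" for n
    unfolding h_def by (intro continuous_intros)
  have h_le_1: "norm (h n y) \<le> 1" for n y
    unfolding h_def using infdist_nonneg[of y C] by auto
  then have h_bounded: "bounded (range (h n))" for n
    by (auto simp: bounded_iff)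
  have h_lim: "(\<lambda>n. h n y) \<longlonglongrightarrow> indicator C y" for y
  proof (cases "y \<in> C")
    case True
    then show ?thesis by (simp add: h_def infdist_zero)
  next
    case False
    then have d: "0 < infdist y C"
      using in_closed_iff_infdist_zero[OF C \<open>C \<noteq> {}\<close>] infdist_nonneg[of y C] by auto
    obtain N where "1 / infdist y C < real N" using reals_Archimedean2 by blast
    then have "1 < real n * infdist y C" if "N \<le> n" for n
      using d that by (simp add: divide_less_eq) (smt (verit) mult_right_mono of_nat_le_iff)
    then have "eventually (\<lambda>n. h n y = 0) sequentially"
      by (auto simp: h_def eventually_sequentially intro!: exI[of _ N])
    then show ?thesis using False by (simp add: tendsto_eventually)
  qed
  have "(\<lambda>n. integral\<^sup>L (P z) (h n)) \<longlonglongrightarrow> measure (P z) C" for z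
  proof -
    have C_sets: "C \<in> sets (P z)" using P[of z] C by (simp add: probs_def)
    interpret prob_space "P z" using P[of z] by (simp add: probs_def)
    have "(\<lambda>n. integral\<^sup>L (P z) (h n)) \<longlonglongrightarrow> integral\<^sup>L (P z) (indicator C :: 'x \<Rightarrow> real)"
      using C_sets h_lim h_le_1
      by (intro integral_dominated_convergence[where w="\<lambda>_. 1"])
         (auto intro: probs_measurable[OF P] borel_measurable_continuous_onI[OF h_cont])
    then show ?thesis using C_sets by simp
  qed
  then have "(\<lambda>z. measure (P z) C) \<in> borel_measurable borel"
    by (rule borel_measurable_LIMSEQ_real) (intro integrals h_cont h_bounded)
  moreover have "emeasure (P z) C = ennreal (measure (P z) C)" for z
    using P[of z] by (simp add: probs_def finite_measure.emeasure_eq_measure prob_space.finite_measure)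
  ultimately show ?thesis by simp
qed

lemma measurable_kernel_probs:
  fixes P :: "'y::topological_space \<Rightarrow> 'x::metric_space measure"
  assumes P: "\<And>z. P z \<in> probs"
    and integrals: "\<And>h::'x \<Rightarrow> real. continuous_on UNIV h \<Longrightarrow> bounded (range h) \<Longrightarrow>
                      (\<lambda>z. integral\<^sup>L (P z) h) \<in> borel_measurable borel"
  shows "P \<in> measurable borel (subprob_algebra borel)"
proof (rule measurable_subprob_algebra_generated[where \<Omega>=UNIV and G="Collect closed"])
  show "sets borel = sigma_sets UNIV (Collect closed)" by (simp add: borel_eq_closed)
  show "Int_stable (Collect closed)" by (auto simp: Int_stable_def)
  show "subprob_space (P z)" "sets (P z) = sets borel" for z
    using P[of z] by (simp_all add: probs_def prob_space_imp_subprob_space)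
  show "(\<lambda>z. emeasure (P z) C) \<in> borel_measurable borel" if "C \<in> Collect closed" for C
    using measurable_emeasure_closed[OF P integrals] that by auto
  show "(\<lambda>z. emeasure (P z) UNIV) \<in> borel_measurable borel"
    using measurable_emeasure_closed[OF P integrals] by auto
qed simp

lemma mixture_in_probs:
  fixes P :: "'x::topological_space \<Rightarrow> 'x measure"
  assumes \<mu>: "\<mu> \<in> probs" and P: "\<And>x. P x \<in> probs"
    and P_meas: "P \<in> measurable borel (subprob_algebra borel)"
  shows "measure_of UNIV (sets borel) (\<lambda>B. \<integral>\<^sup>+x. emeasure (P x) B \<partial>\<mu>) \<in> probs"
proof -
  have sets_\<mu>: "sets \<mu> = sets borel" and "prob_space \<mu>" using \<mu> by (auto simp: probs_def)
  have space_\<mu>: "space \<mu> = UNIV" using sets_eq_imp_space_eq[OF sets_\<mu>] by simp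
  have P_meas': "P \<in> measurable \<mu> (subprob_algebra borel)"
    unfolding measurable_cong_sets[OF sets_\<mu> refl] by (rule P_meas)
  have sets_bind: "sets (\<mu> \<bind> P) = sets borel"
    by (rule sets_bind) (use P space_\<mu> in \<open>auto simp: probs_def\<close>)
  have "measure_of UNIV (sets borel) (\<lambda>B. \<integral>\<^sup>+x. emeasure (P x) B \<partial>\<mu>)
      = measure_of UNIV (sets borel) (emeasure (\<mu> \<bind> P))"
  proof (rule measure_of_eq)
    fix B assume "B \<in> sigma_sets UNIV (sets (borel :: 'x measure))"
    then have "B \<in> sets borel" using sets.sigma_sets_eq[of "borel :: 'x measure"] by simp
    then show "(\<integral>\<^sup>+x. emeasure (P x) B \<partial>\<mu>) = emeasure (\<mu> \<bind> P) B"
      using emeasure_bind[OF _ P_meas'] space_\<mu> by simp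
  qed simp
  also have "\<dots> = \<mu> \<bind> P"
    using measure_of_of_measure[of "\<mu> \<bind> P"] sets_bind sets_eq_imp_space_eq[OF sets_bind] by simp
  finally have "measure_of UNIV (sets borel) (\<lambda>B. \<integral>\<^sup>+x. emeasure (P x) B \<partial>\<mu>) = \<mu> \<bind> P" .
  moreover have "prob_space (\<mu> \<bind> P)"
    by (rule prob_space.prob_space_bind[OF \<open>prob_space \<mu>\<close> _ P_meas']) (use P in \<open>auto simp: probs_def\<close>)
  ultimately show ?thesis using sets_bind by (simp add: probs_def)
qed

lemma measurable_integral_weakly_continuous:
  fixes P :: "'y::topological_space \<Rightarrow> 'x::metric_space measure" and g :: "'x \<Rightarrow> real"
  assumes P: "\<And>z. z \<in> S \<Longrightarrow> P z \<in> probs"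
    and weak: "\<And>h::'x \<Rightarrow> real. continuous_on UNIV h \<Longrightarrow> bounded (range h) \<Longrightarrow>
                 continuous_on S (\<lambda>z. integral\<^sup>L (P z) h)"
    and g: "continuous_on UNIV g" "\<And>y. 0 \<le> g y" and int: "\<And>z. z \<in> S \<Longrightarrow> integrable (P z) g"
  shows "(\<lambda>z. integral\<^sup>L (P z) g) \<in> borel_measurable (restrict_space borel S)"
proof -
  define gn where "gn n y = min (g y) (real n)" for n y
  have gn_cont: "continuous_on UNIV (gn n)" for n
    unfolding gn_def by (intro continuous_intros g(1))
  have gn_bounded: "bounded (range (gn n))" for n
    using g(2) by (auto simp: bounded_iff gn_def intro!: exI[of _ "real n"])
  have "(\<lambda>n. integral\<^sup>L (P z) (gn n)) \<longlonglongrightarrow> integral\<^sup>L (P z) g"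
    if z: "z \<in> space (restrict_space borel S)" for z
  proof (rule integral_dominated_convergence[where w=g])
    have "z \<in> S" using z by (simp add: space_restrict_space)
    note Pz = P[OF this]
    show "g \<in> borel_measurable (P z)" "gn n \<in> borel_measurable (P z)" for n
      using g(1) gn_cont by (auto intro: probs_measurable[OF Pz] borel_measurable_continuous_onI)
    show "integrable (P z) g" by (rule int[OF \<open>z \<in> S\<close>])
    show "AE y in P z. (\<lambda>n. gn n y) \<longlonglongrightarrow> g y"
    proof (rule AE_I2)
      fix y
      obtain N where "g y \<le> real N" using real_arch_simple by blast
      then have "eventually (\<lambda>n. gn n y = g y) sequentially"
        by (auto simp: gn_def eventually_sequentially min_def intro!: exI[of _ N])
      then show "(\<lambda>n. gn n y) \<longlonglongrightarrow> g y" by (rule tendsto_eventually)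
    qed
    show "AE y in P z. norm (gn n y) \<le> g y" for n
      using g(2) by (auto simp: gn_def)
  qed
  then show ?thesis
    by (rule borel_measurable_LIMSEQ_real)
       (assumption, intro borel_measurable_continuous_on_restrict weak gn_cont gn_bounded)
qed


locale mfe_operator =
  fixes c :: "'x::metric_space \<Rightarrow> 'a::real_inner \<Rightarrow> 'x measure \<Rightarrow> real"
    and p :: "'x \<Rightarrow> 'a \<Rightarrow> 'x measure \<Rightarrow> 'x measure"
    and w :: "'x \<Rightarrow> 'a \<Rightarrow> real"
    and A :: "'a set"
    and DF :: "'x \<Rightarrow> ('x \<Rightarrow> real) \<Rightarrow> 'x measure \<Rightarrow> 'a \<Rightarrow> 'a"
    and \<beta> L2 K2 M \<alpha> \<rho> :: real
    and Q :: "'x \<Rightarrow> 'a \<Rightarrow> real"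
    and \<mu> :: "'x measure"
  assumes A_compact: "compact A" and A_nonempty: "A \<noteq> {}" and A_convex: "convex A"
    and beta_nonneg: "0 \<le> \<beta>" and L2_nonneg: "0 \<le> L2" and K2_nonneg: "0 \<le> K2"
    and betaK2: "\<beta> * K2 < 1"
    and M_nonneg: "0 \<le> M" and alpha_nonneg: "0 \<le> \<alpha>" and betaalpha: "\<beta> * \<alpha> < 1"
    and w_cont: "continuous_on (UNIV \<times> A) (\<lambda>z. w (fst z) (snd z))"
    and w_ge1: "\<And>x a. a \<in> A \<Longrightarrow> 1 \<le> w x a"
    and p_prob: "\<And>x a \<nu>. a \<in> A \<Longrightarrow> \<nu> \<in> probs \<Longrightarrow> p x a \<nu> \<in> probs"
    and c_nonneg: "\<And>x a \<nu>. a \<in> A \<Longrightarrow> \<nu> \<in> probs \<Longrightarrow> 0 \<le> c x a \<nu>"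
    and c_cont: "\<And>xs x as a ms m. (\<forall>n. as n \<in> A) \<Longrightarrow> a \<in> A \<Longrightarrow> (\<forall>n. ms n \<in> probs) \<Longrightarrow> m \<in> probs \<Longrightarrow>
        xs \<longlonglongrightarrow> x \<Longrightarrow> as \<longlonglongrightarrow> a \<Longrightarrow> weak_conv ms m \<Longrightarrow>
        (\<lambda>n. c (xs n) (as n) (ms n)) \<longlonglongrightarrow> c x a m"
    and c_Lip_x: "\<And>x x' a \<nu>. a \<in> A \<Longrightarrow> \<nu> \<in> probs \<Longrightarrow> \<bar>c x a \<nu> - c x' a \<nu>\<bar> \<le> L2 * dist x x'"
    and p_cont: "\<And>xs x as a ms m. (\<forall>n. as n \<in> A) \<Longrightarrow> a \<in> A \<Longrightarrow> (\<forall>n. ms n \<in> probs) \<Longrightarrow> m \<in> probs \<Longrightarrow>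
        xs \<longlonglongrightarrow> x \<Longrightarrow> as \<longlonglongrightarrow> a \<Longrightarrow> weak_conv ms m \<Longrightarrow>
        weak_conv (\<lambda>n. p (xs n) (as n) (ms n)) (p x a m)"
    and p_Lip_x_a: "\<And>x x' a a' \<nu>. a \<in> A \<Longrightarrow> a' \<in> A \<Longrightarrow> \<nu> \<in> probs \<Longrightarrow>
        W1 (p x a \<nu>) (p x' a' \<nu>) \<le> ennreal K2 * ennreal (dist x x' + norm (a - a'))"
    and c_bound: "\<And>x a \<nu>. a \<in> A \<Longrightarrow> \<nu> \<in> probs \<Longrightarrow> c x a \<nu> \<le> M * w x a"
    and w_drift: "\<And>x a \<nu>. a \<in> A \<Longrightarrow> \<nu> \<in> probs \<Longrightarrow>
        (\<integral>\<^sup>+ y. ennreal (umax A w y) \<partial>(p x a \<nu>)) \<le> ennreal (\<alpha> * w x a)"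
    and rho_pos: "0 < \<rho>"
    and F_diff: "\<And>x v \<nu> a. v \<in> Fclass A w \<beta> L2 K2 M \<alpha> \<Longrightarrow> \<nu> \<in> probs \<Longrightarrow> a \<in> A \<Longrightarrow>
        (Fop c p \<beta> x v \<nu> has_derivative (\<lambda>h. DF x v \<nu> a \<bullet> h)) (at a within A)"
    and F_strongly_convex: "\<And>x v \<nu> a a'. v \<in> Fclass A w \<beta> L2 K2 M \<alpha> \<Longrightarrow> \<nu> \<in> probs \<Longrightarrow>
        a \<in> A \<Longrightarrow> a' \<in> A \<Longrightarrow>
        Fop c p \<beta> x v \<nu> a \<ge> Fop c p \<beta> x v \<nu> a' + DF x v \<nu> a' \<bullet> (a - a') + \<rho> / 2 * (norm (a - a'))\<^sup>2"
    and Q_in: "Q \<in> Cclass A w \<beta> L2 K2 M \<alpha>"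
    and mu_in: "\<mu> \<in> probs"
begin

definition "L_bound = L2 / (1 - \<beta> * K2)"
definition "M_bound = M / (1 - \<beta> * \<alpha>)"
abbreviation "Qmin \<equiv> umin A Q"
abbreviation "H \<equiv> H1 c p \<beta> A Q \<mu>"
abbreviation "f x \<equiv> fpol c p \<beta> A x Q \<mu>"

lemma L_bound_nonneg: "0 \<le> L_bound" and L_bound_fixpoint: "L2 + \<beta> * (L_bound * K2) = L_bound"
  using L2_nonneg betaK2 by (simp_all add: L_bound_def field_simps)

lemma M_bound_nonneg: "0 \<le> M_bound" and M_bound_fixpoint: "M + \<beta> * (M_bound * \<alpha>) = M_bound"
  using M_nonneg betaalpha by (simp_all add: M_bound_def field_simps)

lemma Q_nonneg: "a \<in> A \<Longrightarrow> 0 \<le> Q x a"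
  and Q_le_weight: "a \<in> A \<Longrightarrow> Q x a \<le> M_bound * w x a"
  and Qmin_lipschitz: "\<bar>Qmin x - Qmin y\<bar> \<le> L_bound * dist x y"
  using Q_in by (auto simp: Cclass_def wnorm_le_def L_bound_def M_bound_def)

lemma Qmin_nonneg: "0 \<le> Qmin x"
  unfolding umin_def using A_nonempty Q_nonneg by (intro cINF_greatest) auto

lemma Qmin_continuous: "continuous_on UNIV Qmin"
  using Qmin_lipschitz L_bound_nonneg
  by (intro lipschitz_on_continuous_on[of L_bound] lipschitz_onI) (auto simp: dist_real_def)

lemma Qmin_measurable: "Qmin \<in> borel_measurable borel"
  using Qmin_continuous by (rule borel_measurable_continuous_onI)

lemma w_le_umax: "a \<in> A \<Longrightarrow> w x a \<le> umax A w x"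
proof -
  have "continuous_on A (\<lambda>a. (\<lambda>z. w (fst z) (snd z)) (x, a))"
    by (rule continuous_on_compose2[OF w_cont]) (auto intro!: continuous_intros)
  then have "bdd_above (w x ` A)"
    using A_compact by (intro bounded_imp_bdd_above compact_imp_bounded compact_continuous_image) simp_all
  then show "a \<in> A \<Longrightarrow> w x a \<le> umax A w x"
    unfolding umax_def by (blast intro: cSUP_upper)
qed

lemma umax_ge_1: "1 \<le> umax A w x"
  using A_nonempty w_ge1 w_le_umax by (meson all_not_in_conv order_trans)

lemma Qmin_le_umax: "Qmin x \<le> M_bound * umax A w x"
proof -
  obtain a where a: "a \<in> A" using A_nonempty by blast
  have "Qmin x \<le> Q x a"
    unfolding umin_def using a Q_nonneg by (intro cINF_lower bdd_belowI2) auto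
  also have "\<dots> \<le> M_bound * umax A w x"
    using Q_le_weight[OF a] w_le_umax[OF a] M_bound_nonneg by (meson mult_left_mono order_trans)
  finally show ?thesis .
qed

lemma Qmin_in_Fclass: "Qmin \<in> Fclass A w \<beta> L2 K2 M \<alpha>"
  unfolding Fclass_def LipSet_def Bset_def
  using Qmin_nonneg Qmin_continuous Qmin_measurable Qmin_lipschitz Qmin_le_umax by (auto simp: L_bound_def M_bound_def)

lemma p_in_probs: "a \<in> A \<Longrightarrow> p x a \<mu> \<in> probs"
  using p_prob mu_in by blast

lemma integrable_Qmin: "a \<in> A \<Longrightarrow> integrable (p x a \<mu>) Qmin"
  and integral_Qmin_le: "a \<in> A \<Longrightarrow> integral\<^sup>L (p x a \<mu>) Qmin \<le> M_bound * (\<alpha> * w x a)"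
  using integrable_dominated_by_weight[OF probs_measurable[OF p_in_probs Qmin_measurable]
      Qmin_nonneg Qmin_le_umax _ w_drift[OF _ mu_in] M_bound_nonneg] umax_ge_1 alpha_nonneg w_ge1
  by (smt (verit) mult_nonneg_nonneg)+

lemma Fop_Qmin: "Fop c p \<beta> x Qmin \<mu> = H x"
  by (simp add: H1_def Fop_def fun_eq_iff)

lemma H1_nonneg: "a \<in> A \<Longrightarrow> 0 \<le> H x a"
  unfolding H1_def using c_nonneg mu_in beta_nonneg Qmin_nonneg by (simp add: integral_nonneg)

lemma H1_le_weight: "a \<in> A \<Longrightarrow> H x a \<le> M_bound * w x a"
proof -
  assume a: "a \<in> A"
  have "H x a \<le> M * w x a + \<beta> * (M_bound * (\<alpha> * w x a))"
    unfolding H1_def using c_bound[OF a mu_in] integral_Qmin_le[OF a] beta_nonneg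
    by (intro add_mono mult_left_mono) auto
  also have "\<dots> = M_bound * w x a"
    using M_bound_fixpoint by (metis distrib_right mult.assoc mult.left_commute)
  finally show ?thesis .
qed

lemma H1_lipschitz: "a \<in> A \<Longrightarrow> \<bar>H x a - H y a\<bar> \<le> L_bound * dist x y"
proof -
  assume a: "a \<in> A"
  have "ennreal \<bar>integral\<^sup>L (p x a \<mu>) Qmin - integral\<^sup>L (p y a \<mu>) Qmin\<bar> \<le> ennreal L_bound * W1 (p x a \<mu>) (p y a \<mu>)"
    using p_in_probs[OF a] integrable_Qmin[OF a] Qmin_measurable Qmin_lipschitz L_bound_nonneg
    by (intro abs_integral_diff_le_W1) auto
  also have "\<dots> \<le> ennreal L_bound * (ennreal K2 * ennreal (dist x y))"
    using p_Lip_x_a[OF a a mu_in, of x y] by (intro mult_left_mono) auto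
  also have "\<dots> = ennreal (L_bound * (K2 * dist x y))"
    using L_bound_nonneg K2_nonneg by (simp add: ennreal_mult)
  finally have W: "\<bar>integral\<^sup>L (p x a \<mu>) Qmin - integral\<^sup>L (p y a \<mu>) Qmin\<bar> \<le> L_bound * (K2 * dist x y)"
    using L_bound_nonneg K2_nonneg by (simp add: ennreal_le_iff)
  have "\<bar>H x a - H y a\<bar>
      = \<bar>(c x a \<mu> - c y a \<mu>) + \<beta> * (integral\<^sup>L (p x a \<mu>) Qmin - integral\<^sup>L (p y a \<mu>) Qmin)\<bar>"
    unfolding H1_def by (simp add: algebra_simps)
  also have "\<dots> \<le> \<bar>c x a \<mu> - c y a \<mu>\<bar> + \<beta> * \<bar>integral\<^sup>L (p x a \<mu>) Qmin - integral\<^sup>L (p y a \<mu>) Qmin\<bar>"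
    using beta_nonneg by (simp add: abs_mult abs_triangle_ineq[THEN order_trans])
  also have "\<dots> \<le> L2 * dist x y + \<beta> * (L_bound * (K2 * dist x y))"
    using c_Lip_x[OF a mu_in] W beta_nonneg by (intro add_mono mult_left_mono)
  also have "\<dots> = L_bound * dist x y"
    using L_bound_fixpoint by (metis distrib_right mult.assoc mult.left_commute)
  finally show ?thesis .
qed

lemma umin_H1_lipschitz: "\<bar>umin A H x - umin A H y\<bar> \<le> L_bound * dist x y"
  using A_nonempty H1_nonneg H1_lipschitz by (intro umin_abs_diff_le bdd_belowI2) auto

lemma p_weakly_continuous:
  fixes h :: "'x \<Rightarrow> real"
  assumes "continuous_on UNIV h" "bounded (range h)"
  shows "continuous_on (UNIV \<times> A) (\<lambda>z. integral\<^sup>L (p (fst z) (snd z) \<mu>) h)"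
proof (rule continuous_on_sequentiallyI)
  fix zs :: "nat \<Rightarrow> 'x \<times> 'a" and z
  assume zs: "\<forall>n. zs n \<in> UNIV \<times> A" "z \<in> UNIV \<times> A" "zs \<longlonglongrightarrow> z"
  have "weak_conv (\<lambda>n. p (fst (zs n)) (snd (zs n)) \<mu>) (p (fst z) (snd z) \<mu>)"
    by (rule p_cont) (use zs mu_in in \<open>simp_all add: mem_Times_iff tendsto_fst tendsto_snd weak_conv_const\<close>)
  then show "(\<lambda>n. integral\<^sup>L (p (fst (zs n)) (snd (zs n)) \<mu>) h) \<longlonglongrightarrow> integral\<^sup>L (p (fst z) (snd z) \<mu>) h"
    using assms by (rule weak_convD)
qed

lemma c_continuous: "continuous_on (UNIV \<times> A) (\<lambda>z. c (fst z) (snd z) \<mu>)"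
proof (rule continuous_on_sequentiallyI)
  fix zs :: "nat \<Rightarrow> 'x \<times> 'a" and z
  assume zs: "\<forall>n. zs n \<in> UNIV \<times> A" "z \<in> UNIV \<times> A" "zs \<longlonglongrightarrow> z"
  show "(\<lambda>n. c (fst (zs n)) (snd (zs n)) \<mu>) \<longlonglongrightarrow> c (fst z) (snd z) \<mu>"
    by (rule c_cont) (use zs mu_in in \<open>simp_all add: mem_Times_iff tendsto_fst tendsto_snd weak_conv_const\<close>)
qed

lemma H1_measurable: "(\<lambda>z. H (fst z) (snd z)) \<in> borel_measurable (restrict_space borel (UNIV \<times> A))"
proof -
  have "(\<lambda>z. integral\<^sup>L (p (fst z) (snd z) \<mu>) Qmin) \<in> borel_measurable (restrict_space borel (UNIV \<times> A))"
    using p_in_probs p_weakly_continuous Qmin_continuous Qmin_nonneg integrable_Qmin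
    by (intro measurable_integral_weakly_continuous) (auto simp: mem_Times_iff)
  moreover have "(\<lambda>z. c (fst z) (snd z) \<mu>) \<in> borel_measurable (restrict_space borel (UNIV \<times> A))"
    by (rule borel_measurable_continuous_on_restrict[OF c_continuous])
  ultimately show ?thesis
    unfolding H1_def by (intro borel_measurable_add borel_measurable_times borel_measurable_const)
qed

lemma H1_in_Cclass: "H \<in> Cclass A w \<beta> L2 K2 M \<alpha>"
  unfolding Cclass_def wnorm_le_def
  using H1_measurable H1_nonneg H1_le_weight umin_H1_lipschitz by (auto simp: L_bound_def M_bound_def)

lemma H1_strongly_convex: "strongly_convex_grad_on A (H x) (DF x Qmin \<mu>) \<rho>"
  using F_strongly_convex[OF Qmin_in_Fclass mu_in] by (simp add: strongly_convex_grad_on_def Fop_Qmin)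

lemma H1_continuous_on_actions: "continuous_on A (H x)"
  using F_diff[OF Qmin_in_Fclass mu_in] has_derivative_continuous
  unfolding continuous_on_eq_continuous_within Fop_Qmin by blast

lemma ex1_minimizer: "\<exists>!a. is_minimizer A (H x) a"
  using A_compact A_convex A_nonempty H1_continuous_on_actions rho_pos H1_strongly_convex
  by (rule strongly_convex_ex1_minimizer)

lemma fpol_minimizer: "is_minimizer A (H x) (f x)"
  unfolding fpol_def Fop_Qmin by (rule theI'[OF ex1_minimizer])

lemma fpol_in_A: "f x \<in> A"
  using fpol_minimizer by (simp add: is_minimizer_def)

lemma fpol_dist_le: "\<rho> / 2 * (norm (f x - f y))\<^sup>2 \<le> 2 * (L_bound * dist x y)"
  using A_convex H1_strongly_convex fpol_minimizer H1_strongly_convex fpol_minimizer H1_lipschitz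
  by (rule strongly_convex_minimizers_close)

lemma fpol_tendsto:
  assumes "xs \<longlonglongrightarrow> x"
  shows "(\<lambda>n. f (xs n)) \<longlonglongrightarrow> f x"
proof -
  have bound_lim: "(\<lambda>n. 4 / \<rho> * L_bound * dist (xs n) x) \<longlonglongrightarrow> 0"
    using tendsto_mult_left[OF tendsto_dist[OF assms tendsto_const[of x]], of "4 / \<rho> * L_bound"] by simp
  have "(norm (f (xs n) - f x))\<^sup>2 \<le> 4 / \<rho> * L_bound * dist (xs n) x" for n
    using fpol_dist_le[of "xs n" x] rho_pos by (simp add: field_simps)
  then have "(\<lambda>n. (norm (f (xs n) - f x))\<^sup>2) \<longlonglongrightarrow> 0"
    by (intro Lim_null_comparison[OF always_eventually bound_lim]) simp
  then have "(\<lambda>n. sqrt ((norm (f (xs n) - f x))\<^sup>2)) \<longlonglongrightarrow> sqrt 0"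
    by (rule tendsto_real_sqrt)
  then show ?thesis by (simp add: tendsto_norm_zero_iff LIM_zero_iff)
qed

lemma H2_in_probs: "H2 c p \<beta> A Q \<mu> \<in> probs"
proof -
  have P: "p x (f x) \<mu> \<in> probs" for x
    using p_in_probs fpol_in_A by blast
  have integrals: "(\<lambda>x. integral\<^sup>L (p x (f x) \<mu>) h) \<in> borel_measurable borel"
    if h: "continuous_on UNIV h" "bounded (range h)" for h :: "'x \<Rightarrow> real"
  proof (rule borel_measurable_continuous_onI, rule continuous_on_sequentiallyI)
    fix xs :: "nat \<Rightarrow> 'x" and x assume xs: "xs \<longlonglongrightarrow> x"
    have "weak_conv (\<lambda>n. p (xs n) (f (xs n)) \<mu>) (p x (f x) \<mu>)"
      by (rule p_cont) (simp_all add: mu_in fpol_in_A fpol_tendsto[OF xs] xs weak_conv_const)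
    then show "(\<lambda>n. integral\<^sup>L (p (xs n) (f (xs n)) \<mu>) h) \<longlonglongrightarrow> integral\<^sup>L (p x (f x) \<mu>) h"
      using h by (rule weak_convD)
  qed
  have "(\<lambda>x. p x (f x) \<mu>) \<in> measurable borel (subprob_algebra borel)"
    by (rule measurable_kernel_probs[where P="\<lambda>x. p x (f x) \<mu>", OF P integrals])
  then show ?thesis
    unfolding H2_def by (rule mixture_in_probs[where P="\<lambda>x. p x (f x) \<mu>", OF mu_in P])
qed

end

theorem mainTheorem1:
  fixes p :: "'x::polish_space \<Rightarrow> 'a::euclidean_space \<Rightarrow> 'x measure \<Rightarrow> 'x measure"
    and c :: "'x \<Rightarrow> 'a \<Rightarrow> 'x measure \<Rightarrow> real"
    and w :: "'x \<Rightarrow> 'a \<Rightarrow> real"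
    and A :: "'a set"
    and DF :: "'x \<Rightarrow> ('x \<Rightarrow> real) \<Rightarrow> 'x measure \<Rightarrow> 'a \<Rightarrow> 'a"
    and \<beta> L1 L2 K1 K2 M \<alpha> \<rho> KF :: real
    and Q :: "'x \<Rightarrow> 'a \<Rightarrow> real"
    and \<mu> :: "'x measure"
  assumes A_compact: "compact A" and A_nonempty: "A \<noteq> {}"
    and beta: "0 < \<beta>" "\<beta> < 1"
    and consts_nonneg: "0 \<le> L1" "0 \<le> L2" "0 \<le> K1" "0 \<le> K2" "0 \<le> KF"
    and w_cont: "continuous_on (UNIV \<times> A) (\<lambda>z. w (fst z) (snd z))"
    and w_ge1: "\<And>x a. a \<in> A \<Longrightarrow> 1 \<le> w x a"
    and p_prob: "\<And>x a \<nu>. a \<in> A \<Longrightarrow> \<nu> \<in> probs \<Longrightarrow> p x a \<nu> \<in> probs"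
    and c_nonneg: "\<And>x a \<nu>. a \<in> A \<Longrightarrow> \<nu> \<in> probs \<Longrightarrow> 0 \<le> c x a \<nu>"
    (* Assumption 1(a) *)
    and c_cont: "\<And>xs x as a ms m. (\<forall>n. as n \<in> A) \<Longrightarrow> a \<in> A \<Longrightarrow> (\<forall>n. ms n \<in> probs) \<Longrightarrow> m \<in> probs \<Longrightarrow>
        xs \<longlonglongrightarrow> x \<Longrightarrow> as \<longlonglongrightarrow> a \<Longrightarrow> weak_conv ms m \<Longrightarrow>
        (\<lambda>n. c (xs n) (as n) (ms n)) \<longlonglongrightarrow> c x a m"
    and c_Lip_mu: "\<And>\<nu> \<nu>' x a. \<nu> \<in> probs \<Longrightarrow> \<nu>' \<in> probs \<Longrightarrow> a \<in> A \<Longrightarrow>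
        ennreal (\<bar>c x a \<nu> - c x a \<nu>'\<bar> / w x a) \<le> ennreal L1 * W1 \<nu> \<nu>'"
    and c_Lip_x: "\<And>x x' a \<nu>. a \<in> A \<Longrightarrow> \<nu> \<in> probs \<Longrightarrow>
        \<bar>c x a \<nu> - c x' a \<nu>\<bar> \<le> L2 * dist x x'"
    (* Assumption 1(b) *)
    and p_cont: "\<And>xs x as a ms m. (\<forall>n. as n \<in> A) \<Longrightarrow> a \<in> A \<Longrightarrow> (\<forall>n. ms n \<in> probs) \<Longrightarrow> m \<in> probs \<Longrightarrow>
        xs \<longlonglongrightarrow> x \<Longrightarrow> as \<longlonglongrightarrow> a \<Longrightarrow> weak_conv ms m \<Longrightarrow>
        weak_conv (\<lambda>n. p (xs n) (as n) (ms n)) (p x a m)"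
    and p_Lip_a_mu: "\<And>x a a' \<nu> \<nu>'. a \<in> A \<Longrightarrow> a' \<in> A \<Longrightarrow> \<nu> \<in> probs \<Longrightarrow> \<nu>' \<in> probs \<Longrightarrow>
        W1 (p x a \<nu>) (p x a' \<nu>') \<le> ennreal K1 * (ennreal (norm (a - a')) + W1 \<nu> \<nu>')"
    and p_Lip_x_a: "\<And>x x' a a' \<nu>. a \<in> A \<Longrightarrow> a' \<in> A \<Longrightarrow> \<nu> \<in> probs \<Longrightarrow>
        W1 (p x a \<nu>) (p x' a' \<nu>) \<le> ennreal K2 * ennreal (dist x x' + norm (a - a'))"
    and betaK2: "\<beta> * K2 < 1"
    (* Assumption 1(c) *)
    and A_convex: "convex A"
    (* Assumption 1(d) *)
    and M_nonneg: "0 \<le> M" and alpha_nonneg: "0 \<le> \<alpha>" and betaalpha: "\<beta> * \<alpha> < 1"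
    and c_bound: "\<And>x a \<nu>. a \<in> A \<Longrightarrow> \<nu> \<in> probs \<Longrightarrow> c x a \<nu> \<le> M * w x a"
    and w_drift: "\<And>x a \<nu>. a \<in> A \<Longrightarrow> \<nu> \<in> probs \<Longrightarrow>
        (\<integral>\<^sup>+ y. ennreal (umax A w y) \<partial>(p x a \<nu>)) \<le> ennreal (\<alpha> * w x a)"
    (* Assumption 1(e), with \<xi> = \<beta>; DF is the gradient in a *)
    and rho_pos: "0 < \<rho>"
    and F_diff: "\<And>x v \<nu> a. v \<in> Fclass A w \<beta> L2 K2 M \<alpha> \<Longrightarrow> \<nu> \<in> probs \<Longrightarrow> a \<in> A \<Longrightarrow>
        (Fop c p \<beta> x v \<nu> has_derivative (\<lambda>h. DF x v \<nu> a \<bullet> h)) (at a within A)"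
    and F_strongly_convex: "\<And>x v \<nu> a a'. v \<in> Fclass A w \<beta> L2 K2 M \<alpha> \<Longrightarrow> \<nu> \<in> probs \<Longrightarrow>
        a \<in> A \<Longrightarrow> a' \<in> A \<Longrightarrow>
        Fop c p \<beta> x v \<nu> a \<ge> Fop c p \<beta> x v \<nu> a' + DF x v \<nu> a' \<bullet> (a - a') + \<rho> / 2 * (norm (a - a'))\<^sup>2"
    and grad_Lip: "\<And>x x' v v' \<nu> \<nu>' a. v \<in> Fclass A w \<beta> L2 K2 M \<alpha> \<Longrightarrow> v' \<in> Fclass A w \<beta> L2 K2 M \<alpha> \<Longrightarrow>
        \<nu> \<in> probs \<Longrightarrow> \<nu>' \<in> probs \<Longrightarrow> a \<in> A \<Longrightarrow>
        ennreal (norm (DF x v \<nu> a - DF x' v' \<nu>' a))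
          \<le> ennreal KF * (ennreal (dist x x') + ennreal (wmax_norm A w (\<lambda>y. v y - v' y)) + W1 \<nu> \<nu>')"
    and Q_in: "Q \<in> Cclass A w \<beta> L2 K2 M \<alpha>"
    and mu_in: "\<mu> \<in> probs"
  shows "(\<forall>x. \<exists>!a. is_minimizer A (Fop c p \<beta> x (umin A Q) \<mu>) a)
         \<and> H1 c p \<beta> A Q \<mu> \<in> Cclass A w \<beta> L2 K2 M \<alpha>
         \<and> H2 c p \<beta> A Q \<mu> \<in> probs
         \<and> wnorm_le A w (H1 c p \<beta> A Q \<mu>) (M / (1 - \<beta> * \<alpha>))
         \<and> (\<forall>x y. \<bar>umin A (H1 c p \<beta> A Q \<mu>) x - umin A (H1 c p \<beta> A Q \<mu>) y\<bar>
                   \<le> (L2 / (1 - \<beta> * K2)) * dist x y)"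
proof -
  interpret mfe_operator c p w A DF \<beta> L2 K2 M \<alpha> \<rho> Q \<mu>
    using assms by unfold_locales auto
  have "H1 c p \<beta> A Q \<mu> \<in> Cclass A w \<beta> L2 K2 M \<alpha>"
    by (rule H1_in_Cclass)
  then show ?thesis
    using ex1_minimizer H2_in_probs by (simp add: Fop_Qmin) (simp add: Cclass_def)
qed

end
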